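(* For every $n\geq 1$, there exists a signed digraph $G$ on $[n]$ such that every nilpotent $G$-function $f:\{0,1,2\}^n\to\{0,1,2\}^n$ has class at least $\lfloor\log_2 n\rfloor+2$. Furthermore, if $n=2^{\lfloor\log_2 n\rfloor+1}-1$, then such a $G$ can be chosen strongly connected.
   Context: A signed digraph is a digraph (loops allowed, no multiple arcs) in which each arc is labeled positive, negative, or null (unsigned). For a finite interval of integers $A$, a function over $A$ is a map $f:A^n\to A^n$; $f^0=\mathrm{id}$, $f^k=f\circ f^{k-1}$. The interaction graph $G(f)$ is the signed digraph on $[n]$ with an arc $(j,i)$ iff $f_i(a)\neq f_i(b)$ for some $a,b\in A^n$ with $a_j<b_j$ and $a_\ell=b_\ell$ for $\ell\neq j$; the arc is positive if $f_i(a)\leq f_i(b)$ for all such pairs, negative if $f_i(a)\geq f_i(b)$ for all such pairs, and null otherwise. $f$ is a $G$-function if $G(f)=G$. $f$ is nilpotent if $f^k$ is constant for some $k\geq 0$; the least such $k$ is its class. *)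

theory Defs
  imports Complex_Main
begin

text \<open>Vertices of a digraph on [n] are 0,...,n-1. Configurations in A^n with
  A = {0,...,q-1} are represented as functions nat => nat that take values
  below q on [n] and are 0 outside [n].\<close>

datatype sign = Pos | Neg | Null

text \<open>A signed digraph: G j i = None means no arc (j,i); Some s means an arc
  (j,i) labelled s.\<close>
type_synonym sdigraph = "nat \<Rightarrow> nat \<Rightarrow> sign option"

definition sdigraph_on :: "nat \<Rightarrow> sdigraph \<Rightarrow> bool" where
  "sdigraph_on n G \<longleftrightarrow> (\<forall>j i. G j i \<noteq> None \<longrightarrow> j < n \<and> i < n)"

definition confs :: "nat \<Rightarrow> nat \<Rightarrow> (nat \<Rightarrow> nat) set" where
  "confs q n = {x. (\<forall>i<n. x i < q) \<and> (\<forall>i\<ge>n. x i = 0)}"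

definition fun_over :: "nat \<Rightarrow> nat \<Rightarrow> ((nat \<Rightarrow> nat) \<Rightarrow> (nat \<Rightarrow> nat)) \<Rightarrow> bool" where
  "fun_over q n f \<longleftrightarrow> f ` confs q n \<subseteq> confs q n"

definition jpairs :: "nat \<Rightarrow> nat \<Rightarrow> nat \<Rightarrow> ((nat \<Rightarrow> nat) \<times> (nat \<Rightarrow> nat)) set" where
  "jpairs q n j = {(a, b). a \<in> confs q n \<and> b \<in> confs q n \<and> a j < b j \<and> (\<forall>l. l \<noteq> j \<longrightarrow> a l = b l)}"

definition interaction_graph :: "nat \<Rightarrow> nat \<Rightarrow> ((nat \<Rightarrow> nat) \<Rightarrow> (nat \<Rightarrow> nat)) \<Rightarrow> sdigraph" where
  "interaction_graph q n f j i =
     (if j < n \<and> i < n \<and> (\<exists>(a, b) \<in> jpairs q n j. f a i \<noteq> f b i) then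
        Some (if (\<forall>(a, b) \<in> jpairs q n j. f a i \<le> f b i) then Pos
              else if (\<forall>(a, b) \<in> jpairs q n j. f a i \<ge> f b i) then Neg
              else Null)
      else None)"

definition is_G_function :: "nat \<Rightarrow> nat \<Rightarrow> sdigraph \<Rightarrow> ((nat \<Rightarrow> nat) \<Rightarrow> (nat \<Rightarrow> nat)) \<Rightarrow> bool" where
  "is_G_function q n G f \<longleftrightarrow> fun_over q n f \<and> interaction_graph q n f = G"

definition iter_const :: "nat \<Rightarrow> nat \<Rightarrow> ((nat \<Rightarrow> nat) \<Rightarrow> (nat \<Rightarrow> nat)) \<Rightarrow> nat \<Rightarrow> bool" where
  "iter_const q n f k \<longleftrightarrow> (\<exists>c. \<forall>x \<in> confs q n. (f ^^ k) x = c)"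

definition nilpotent :: "nat \<Rightarrow> nat \<Rightarrow> ((nat \<Rightarrow> nat) \<Rightarrow> (nat \<Rightarrow> nat)) \<Rightarrow> bool" where
  "nilpotent q n f \<longleftrightarrow> (\<exists>k. iter_const q n f k)"

definition nil_class :: "nat \<Rightarrow> nat \<Rightarrow> ((nat \<Rightarrow> nat) \<Rightarrow> (nat \<Rightarrow> nat)) \<Rightarrow> nat" where
  "nil_class q n f = (LEAST k. iter_const q n f k)"

definition strongly_connected :: "nat \<Rightarrow> sdigraph \<Rightarrow> bool" where
  "strongly_connected n G \<longleftrightarrow>
     (\<forall>i<n. \<forall>j<n. (i, j) \<in> {(u, v). G u v \<noteq> None}\<^sup>*)"

end

theory Submission
  imports Defs
begin

text \<open>A vertex c whose only in-neighbour is v computes f x c = h (x v) for a function h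
  on {0,1,2}; a null arc makes h non-monotone, so h separates 0,1 and 1,2, and a positive
  arc makes h monotone and nonconstant, so h separates 0 and 2. Hence if v has a null
  child and a positive child, both fed by v alone, and x \<mapsto> (f^t x) v is nonconstant, then
  x \<mapsto> (f^(t+1) x) c is nonconstant for one of the two children. Along a binary tree of
  depth m the variation survives to some vertex at time m + 1, so f^(m+1) is not constant.
  The tree on 2^m vertices does this for every n; closing a complete tree with
  2^(m+1) - 1 vertices by arcs from the leaves back to the root makes it strongly
  connected without disturbing any fork.\<close>

definition iterate_varies_at ::
    "nat \<Rightarrow> nat \<Rightarrow> ((nat \<Rightarrow> nat) \<Rightarrow> (nat \<Rightarrow> nat)) \<Rightarrow> nat \<Rightarrow> nat \<Rightarrow> bool" where
  "iterate_varies_at q n f t v \<longleftrightarrow> (\<exists>x\<in>confs q n. \<exists>y\<in>confs q n. (f ^^ t) x v \<noteq> (f ^^ t) y v)"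

definition fork :: "sdigraph \<Rightarrow> nat \<Rightarrow> nat \<Rightarrow> nat \<Rightarrow> bool" where
  "fork G v c1 c2 \<longleftrightarrow> G v c1 = Some Null \<and> G v c2 = Some Pos \<and>
     (\<forall>j. j \<noteq> v \<longrightarrow> G j c1 = None \<and> G j c2 = None)"

lemma funpow_in_confs: "fun_over q n f \<Longrightarrow> x \<in> confs q n \<Longrightarrow> (f ^^ t) x \<in> confs q n"
  by (induction t) (auto simp: fun_over_def)

lemma interaction_graph_arc_bounds: "interaction_graph q n f j i \<noteq> None \<Longrightarrow> j < n \<and> i < n"
  by (simp add: interaction_graph_def split: if_splits)

lemma interaction_graph_arc_varies:
  "interaction_graph q n f j i \<noteq> None \<Longrightarrow> \<exists>a\<in>confs q n. \<exists>b\<in>confs q n. f a i \<noteq> f b i"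
  unfolding interaction_graph_def jpairs_def by (auto split: if_splits)

lemma interaction_graph_None_eq:
  assumes none: "interaction_graph q n f k i = None" and "i < n"
    and a: "a \<in> confs q n" and b: "b \<in> confs q n" and agree: "\<forall>l. l \<noteq> k \<longrightarrow> a l = b l"
  shows "f a i = f b i"
proof (cases "a k = b k")
  case True
  then have "a = b" using agree by (metis ext)
  then show ?thesis by simp
next
  case False
  moreover have "a k = b k" if "\<not> k < n" using a b that by (simp add: confs_def)
  ultimately have "k < n" by blast
  have no_pair: "\<forall>(a, b)\<in>jpairs q n k. f a i = f b i"
    using none \<open>i < n\<close> \<open>k < n\<close> by (auto simp: interaction_graph_def split: if_splits)
  from False consider "a k < b k" | "b k < a k" by linarith
  then show ?thesis
  proof cases
    case 1
    then have "(a, b) \<in> jpairs q n k" using a b agree by (simp add: jpairs_def)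
    then show ?thesis using no_pair by auto
  next
    case 2
    then have "(b, a) \<in> jpairs q n k" using a b agree by (simp add: jpairs_def)
    then show ?thesis using no_pair by auto
  qed
qed

lemma interaction_graph_local:
  assumes "i < n" and a: "a \<in> confs q n" and b: "b \<in> confs q n"
    and agree: "\<forall>j. interaction_graph q n f j i \<noteq> None \<longrightarrow> a j = b j"
  shows "f a i = f b i"
proof -
  \<comment> \<open>Walk from a to b one coordinate at a time.\<close>
  define c where "c k = (\<lambda>l. if l < k then b l else a l)" for k
  have "c k \<in> confs q n \<and> f (c k) i = f a i" for k
  proof (induction k)
    case 0
    then show ?case using a by (simp add: c_def)
  next
    case (Suc k)
    have c_Suc: "c (Suc k) \<in> confs q n" using a b by (auto simp: c_def confs_def)
    have "f (c (Suc k)) i = f (c k) i"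
    proof (cases "interaction_graph q n f k i = None")
      case True
      show ?thesis
        by (rule interaction_graph_None_eq[OF True \<open>i < n\<close> c_Suc conjunct1[OF Suc.IH]])
          (auto simp: c_def)
    next
      case False
      then have "a k = b k" using agree by blast
      then have "c (Suc k) = c k" by (auto simp: c_def fun_eq_iff less_Suc_eq)
      then show ?thesis by simp
    qed
    then show ?case using Suc.IH c_Suc by simp
  qed
  moreover have "c n = b" using a b by (auto simp: c_def confs_def fun_eq_iff)
  ultimately show ?thesis by metis
qed

lemma sole_input_factor:
  assumes "c < n" and sole: "\<forall>j. j \<noteq> v \<longrightarrow> interaction_graph q n f j c = None"
    and "v < n" and a: "a \<in> confs q n"
  shows "f a c = f ((\<lambda>_. 0)(v := a v)) c"
proof (rule interaction_graph_local[OF \<open>c < n\<close> a])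
  show "(\<lambda>_. 0)(v := a v) \<in> confs q n" using a \<open>v < n\<close> by (auto simp: confs_def)
  show "\<forall>j. interaction_graph q n f j c \<noteq> None \<longrightarrow> a j = ((\<lambda>_. 0)(v := a v)) j"
    using sole by auto
qed

lemma Pos_arc_mono:
  assumes pos: "interaction_graph q n f v c = Some Pos" and "u \<le> w" "w < q"
  shows "f ((\<lambda>_. 0)(v := u)) c \<le> f ((\<lambda>_. 0)(v := w)) c"
proof (cases "u = w")
  case False
  have "v < n" using interaction_graph_arc_bounds[of q n f v c] pos by simp
  then have "((\<lambda>_. 0)(v := u), (\<lambda>_. 0)(v := w)) \<in> jpairs q n v"
    using False assms(2,3) by (auto simp: jpairs_def confs_def)
  then show ?thesis
    using pos by (auto simp: interaction_graph_def split: if_splits)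
qed simp

lemma Null_arc_not_mono:
  assumes null: "interaction_graph q n f v c = Some Null"
    and sole: "\<forall>j. j \<noteq> v \<longrightarrow> interaction_graph q n f j c = None"
  defines "h \<equiv> \<lambda>w. f ((\<lambda>_. 0)(v := w)) c"
  shows "\<exists>u w. u < w \<and> w < q \<and> h w < h u" and "\<exists>u w. u < w \<and> w < q \<and> h u < h w"
proof -
  have bounds: "v < n" "c < n" using interaction_graph_arc_bounds[of q n f v c] null by simp_all
  have factor: "f a c = h (a v)" if "a \<in> confs q n" for a
    unfolding h_def by (rule sole_input_factor[OF bounds(2) sole bounds(1) that])
  have pair: "a v < b v \<and> b v < q \<and> f a c = h (a v) \<and> f b c = h (b v)"
    if "(a, b) \<in> jpairs q n v" for a b
    using that factor bounds(1) by (auto simp: jpairs_def confs_def)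
  obtain a b where "(a, b) \<in> jpairs q n v" "f b c < f a c"
    using null by (auto simp: interaction_graph_def not_le split: if_splits)
  with pair show "\<exists>u w. u < w \<and> w < q \<and> h w < h u" by metis
  obtain a b where "(a, b) \<in> jpairs q n v" "f a c < f b c"
    using null by (auto simp: interaction_graph_def not_le split: if_splits)
  with pair show "\<exists>u w. u < w \<and> w < q \<and> h u < h w" by metis
qed

lemma three_values_separated:
  fixes g h :: "nat \<Rightarrow> nat"
  assumes "x < 3" "y < 3" "x \<noteq> y"
    and g_down: "\<exists>u w. u < w \<and> w < 3 \<and> g w < g u"
    and g_up: "\<exists>u w. u < w \<and> w < 3 \<and> g u < g w"
    and h_mono: "\<And>u w. u \<le> w \<Longrightarrow> w < 3 \<Longrightarrow> h u \<le> h w"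
    and h_nonconst: "\<exists>u<3. \<exists>w<3. h u \<noteq> h w"
  shows "g x \<noteq> g y \<or> h x \<noteq> h y"
proof -
  have lt3: "u < 3 \<longleftrightarrow> u = 0 \<or> u = 1 \<or> u = (2::nat)" for u by auto
  have pairs: "u = 0 \<and> w = 1 \<or> u = 0 \<and> w = 2 \<or> u = 1 \<and> w = (2::nat)"
    if "u < w" "w < 3" for u w
    using that by auto
  obtain u w where down: "u < w" "w < 3" "g w < g u" using g_down by blast
  obtain u' w' where up: "u' < w'" "w' < 3" "g u' < g w'" using g_up by blast
  have "g 0 \<noteq> g 1" "g 1 \<noteq> g 2"
    using pairs[OF down(1,2)] pairs[OF up(1,2)] down(3) up(3) by auto
  moreover have "h 0 \<noteq> h 2"
    using h_nonconst h_mono[of 0 1] h_mono[of 1 2] unfolding lt3 by auto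
  ultimately show ?thesis
    using assms(1-3) unfolding lt3 by auto
qed

lemma fork_propagates_variation:
  assumes fo: "fun_over 3 n f" and fork: "fork (interaction_graph 3 n f) v c1 c2"
    and varies: "iterate_varies_at 3 n f t v"
  shows "iterate_varies_at 3 n f (Suc t) c1 \<or> iterate_varies_at 3 n f (Suc t) c2"
proof -
  define h where "h c w = f ((\<lambda>_. 0)(v := w)) c" for c w
  have null: "interaction_graph 3 n f v c1 = Some Null"
    and pos: "interaction_graph 3 n f v c2 = Some Pos"
    using fork by (simp_all add: fork_def)
  have sole: "\<forall>j. j \<noteq> v \<longrightarrow> interaction_graph 3 n f j c = None" if "c \<in> {c1, c2}" for c
    using fork that by (auto simp: fork_def)
  have bounds: "v < n" "c1 < n" "c2 < n"
    using interaction_graph_arc_bounds[of 3 n f v] null pos by auto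
  have factor: "f a c = h c (a v)" if "a \<in> confs 3 n" "c \<in> {c1, c2}" for a c
    unfolding h_def using sole_input_factor[OF _ sole[OF that(2)] bounds(1) that(1)] bounds that(2)
    by auto
  have below3: "a v < 3" if "a \<in> confs 3 n" for a
    using that bounds(1) by (simp add: confs_def)
  have next_value: "(f ^^ Suc t) x c = h c ((f ^^ t) x v)" if "x \<in> confs 3 n" "c \<in> {c1, c2}" for x c
    using factor[OF funpow_in_confs[OF fo that(1)] that(2)] by simp
  obtain x y where xy: "x \<in> confs 3 n" "y \<in> confs 3 n" "(f ^^ t) x v \<noteq> (f ^^ t) y v"
    using varies by (auto simp: iterate_varies_at_def)
  obtain a b where ab: "a \<in> confs 3 n" "b \<in> confs 3 n" "f a c2 \<noteq> f b c2"
    using interaction_graph_arc_varies[of 3 n f v c2] pos by auto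
  have "h c2 (a v) \<noteq> h c2 (b v)" using ab factor by simp
  then have h2_nonconst: "\<exists>u<3. \<exists>w<3. h c2 u \<noteq> h c2 w" using below3 ab(1,2) by blast
  have "h c1 ((f ^^ t) x v) \<noteq> h c1 ((f ^^ t) y v) \<or> h c2 ((f ^^ t) x v) \<noteq> h c2 ((f ^^ t) y v)"
  proof (rule three_values_separated)
    show "(f ^^ t) x v < 3" "(f ^^ t) y v < 3"
      using below3 funpow_in_confs[OF fo] xy(1,2) by auto
    show "\<exists>u w. u < w \<and> w < 3 \<and> h c1 w < h c1 u" "\<exists>u w. u < w \<and> w < 3 \<and> h c1 u < h c1 w"
      using Null_arc_not_mono[OF null sole[OF insertI1]] unfolding h_def by auto
    show "h c2 u \<le> h c2 w" if "u \<le> w" "w < 3" for u w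
      unfolding h_def by (rule Pos_arc_mono[OF pos that])
  qed (use xy(3) h2_nonconst in auto)
  then have "(f ^^ Suc t) x c1 \<noteq> (f ^^ Suc t) y c1 \<or> (f ^^ Suc t) x c2 \<noteq> (f ^^ Suc t) y c2"
    using next_value[OF xy(1)] next_value[OF xy(2)] by simp
  then show ?thesis
    using xy(1,2) unfolding iterate_varies_at_def by blast
qed

lemma nil_class_gt_of_varies:
  assumes fo: "fun_over q n f" and nil: "nilpotent q n f" and varies: "iterate_varies_at q n f t v"
  shows "t < nil_class q n f"
proof (rule ccontr)
  let ?k = "nil_class q n f"
  assume "\<not> t < ?k"
  then have t: "t = ?k + (t - ?k)" by simp
  have "iter_const q n f ?k"
    using nil unfolding nilpotent_def nil_class_def by (rule LeastI_ex)
  then obtain c where c: "\<forall>x\<in>confs q n. (f ^^ ?k) x = c" by (auto simp: iter_const_def)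
  have "(f ^^ t) x = c" if "x \<in> confs q n" for x
    using c funpow_in_confs[OF fo that] by (subst t, subst funpow_add) simp
  then show False using varies by (auto simp: iterate_varies_at_def)
qed

lemma nil_class_ge_of_forks:
  assumes G: "is_G_function 3 n G f" and nil: "nilpotent 3 n f"
    and root: "r \<in> L 0" "G j r \<noteq> None"
    and forks: "\<And>t v. t < m \<Longrightarrow> v \<in> L t \<Longrightarrow>
      left v \<in> L (Suc t) \<and> right v \<in> L (Suc t) \<and> fork G v (left v) (right v)"
  shows "m + 2 \<le> nil_class 3 n f"
proof -
  have fo: "fun_over 3 n f" and ig: "interaction_graph 3 n f = G"
    using G by (auto simp: is_G_function_def)
  have "t \<le> m \<Longrightarrow> \<exists>v\<in>L t. iterate_varies_at 3 n f (Suc t) v" for t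
  proof (induction t)
    case 0
    have "iterate_varies_at 3 n f 1 r"
      using interaction_graph_arc_varies[of 3 n f j r] root(2) ig
      by (auto simp: iterate_varies_at_def)
    then show ?case using root(1) by auto
  next
    case (Suc t)
    then obtain v where "v \<in> L t" "iterate_varies_at 3 n f (Suc t) v" by auto
    moreover have "left v \<in> L (Suc t)" "right v \<in> L (Suc t)" "fork G v (left v) (right v)"
      using forks[OF Suc_le_lessD[OF Suc.prems] \<open>v \<in> L t\<close>] by simp_all
    ultimately show ?case
      using fork_propagates_variation[OF fo] ig by metis
  qed
  then obtain v where "iterate_varies_at 3 n f (Suc m) v" by blast
  from nil_class_gt_of_varies[OF fo nil this] show ?thesis by simp
qed

text \<open>Heap order: the children of v are 2v (null arc) and 2v + 1 (positive arc); the root 0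
  is its own null child.\<close>
definition binary_tree_graph :: "nat \<Rightarrow> sdigraph" where
  "binary_tree_graph m j i =
     (if i < 2 ^ m \<and> j = i div 2 then Some (if even i then Null else Pos) else None)"

lemma binary_tree_graph_on: "2 ^ m \<le> n \<Longrightarrow> sdigraph_on n (binary_tree_graph m)"
  by (auto simp: sdigraph_on_def binary_tree_graph_def split: if_splits)

lemma binary_tree_graph_fork:
  assumes "t < m" "v < 2 ^ t"
  shows "fork (binary_tree_graph m) v (2 * v) (2 * v + 1)"
proof -
  have "(2::nat) ^ Suc t \<le> 2 ^ m" using assms(1) by (intro power_increasing) auto
  then have "2 * v + 1 < 2 ^ m" using assms(2) by simp
  then show ?thesis by (auto simp: fork_def binary_tree_graph_def)
qed

text \<open>The complete binary tree of depth m in heap order (children 2v + 1 by a null arc and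
  2v + 2 by a positive arc), closed by positive arcs from its leaves 2^m - 1, ... back to the
  root.\<close>
definition feedback_tree_graph :: "nat \<Rightarrow> sdigraph" where
  "feedback_tree_graph m j i =
     (if i < 2 ^ (m + 1) - 1 \<and> j < 2 ^ (m + 1) - 1 then
        (if i = 0 then (if 2 ^ m - 1 \<le> j then Some Pos else None)
         else if j = (i - 1) div 2 then Some (if odd i then Null else Pos) else None)
      else None)"

lemma feedback_tree_graph_on: "sdigraph_on (2 ^ (m + 1) - 1) (feedback_tree_graph m)"
  by (auto simp: sdigraph_on_def feedback_tree_graph_def split: if_splits)

lemma feedback_tree_graph_fork:
  assumes "t < m" "v < 2 ^ (t + 1) - 1"
  shows "fork (feedback_tree_graph m) v (2 * v + 1) (2 * v + 2)"
proof -
  have "(2::nat) ^ (t + 2) \<le> 2 ^ (m + 1)" using assms(1) by (intro power_increasing) auto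
  then have "2 * v + 2 < 2 ^ (m + 1) - 1" using assms(2) by simp
  then show ?thesis by (auto simp: fork_def feedback_tree_graph_def)
qed

lemma feedback_tree_graph_root_arc: "feedback_tree_graph m (2 ^ m - 1) 0 \<noteq> None"
proof -
  have "(1::nat) \<le> 2 ^ m" "(2::nat) ^ (m + 1) = 2 * 2 ^ m" by simp_all
  then have "2 ^ m - 1 < (2::nat) ^ (m + 1) - 1" by linarith
  then show ?thesis by (simp add: feedback_tree_graph_def)
qed

lemma feedback_tree_graph_reachable_from_root:
  "j < 2 ^ (m + 1) - 1 \<Longrightarrow> (0, j) \<in> {(u, v). feedback_tree_graph m u v \<noteq> None}\<^sup>*"
proof (induction j rule: less_induct)
  case (less j)
  show ?case
  proof (cases "j = 0")
    case False
    then have "(j - 1) div 2 < j" by simp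
    with less have "(0, (j - 1) div 2) \<in> {(u, v). feedback_tree_graph m u v \<noteq> None}\<^sup>*" by simp
    moreover have "feedback_tree_graph m ((j - 1) div 2) j \<noteq> None"
      using less.prems False by (simp add: feedback_tree_graph_def)
    ultimately show ?thesis by (simp add: rtrancl_into_rtrancl)
  qed simp
qed

lemma feedback_tree_graph_reaches_root:
  "i < 2 ^ (m + 1) - 1 \<Longrightarrow> (i, 0) \<in> {(u, v). feedback_tree_graph m u v \<noteq> None}\<^sup>*"
proof (induction "2 ^ (m + 1) - 1 - i" arbitrary: i rule: less_induct)
  case less
  show ?case
  proof (cases "2 ^ m - 1 \<le> i")
    case True
    then have "feedback_tree_graph m i 0 \<noteq> None"
      using less.prems by (simp add: feedback_tree_graph_def)
    then show ?thesis by blast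
  next
    case False
    then have child: "2 * i + 1 < 2 ^ (m + 1) - 1" by simp
    then have "feedback_tree_graph m i (2 * i + 1) \<noteq> None"
      using less.prems by (simp add: feedback_tree_graph_def)
    moreover have "(2 * i + 1, 0) \<in> {(u, v). feedback_tree_graph m u v \<noteq> None}\<^sup>*"
      using less.hyps[OF _ child] child by simp
    ultimately show ?thesis by (simp add: converse_rtrancl_into_rtrancl)
  qed
qed

lemma feedback_tree_graph_strongly_connected:
  "strongly_connected (2 ^ (m + 1) - 1) (feedback_tree_graph m)"
  unfolding strongly_connected_def
  using feedback_tree_graph_reaches_root feedback_tree_graph_reachable_from_root
  by (blast intro: rtrancl_trans)

lemma two_pow_floor_log_le:
  assumes "1 \<le> n"
  shows "2 ^ nat \<lfloor>log 2 (real n)\<rfloor> \<le> n"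
proof -
  have "0 \<le> log 2 (real n)" using assms by simp
  then have "(2::real) powr real (nat \<lfloor>log 2 (real n)\<rfloor>) \<le> 2 powr log 2 (real n)"
    by (intro powr_mono) linarith+
  also have "\<dots> = real n" using assms by simp
  finally show ?thesis by (simp add: powr_realpow)
qed

theorem proposition5:
  fixes n :: nat
  assumes "n \<ge> 1"
  shows "(\<exists>G. sdigraph_on n G \<and>
            (\<forall>f. is_G_function 3 n G f \<and> nilpotent 3 n f \<longrightarrow>
                 nil_class 3 n f \<ge> nat \<lfloor>log 2 (real n)\<rfloor> + 2))
       \<and> (n = 2 ^ (nat \<lfloor>log 2 (real n)\<rfloor> + 1) - 1 \<longrightarrow>
          (\<exists>G. sdigraph_on n G \<and> strongly_connected n G \<and>
            (\<forall>f. is_G_function 3 n G f \<and> nilpotent 3 n f \<longrightarrow>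
                 nil_class 3 n f \<ge> nat \<lfloor>log 2 (real n)\<rfloor> + 2)))"
proof -
  define m where "m = nat \<lfloor>log 2 (real n)\<rfloor>"
  have tree_bound: "m + 2 \<le> nil_class 3 n f"
    if "is_G_function 3 n (binary_tree_graph m) f" "nilpotent 3 n f" for f
    by (rule nil_class_ge_of_forks[OF that, where L = "\<lambda>t. {..<2 ^ t}" and r = 0 and j = 0
          and left = "\<lambda>v. 2 * v" and right = "\<lambda>v. 2 * v + 1"])
      (auto simp: binary_tree_graph_def intro: binary_tree_graph_fork[simplified])
  have feedback_bound: "m + 2 \<le> nil_class 3 n f"
    if "is_G_function 3 n (feedback_tree_graph m) f" "nilpotent 3 n f" for f
    by (rule nil_class_ge_of_forks[OF that, where L = "\<lambda>t. {..<2 ^ (t + 1) - 1}"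
          and r = 0 and j = "2 ^ m - 1" and left = "\<lambda>v. 2 * v + 1" and right = "\<lambda>v. 2 * v + 2"])
      (auto intro: feedback_tree_graph_fork[simplified] feedback_tree_graph_root_arc[simplified])
  have "sdigraph_on n (binary_tree_graph m)"
    using binary_tree_graph_on two_pow_floor_log_le[OF assms] unfolding m_def by blast
  with tree_bound feedback_tree_graph_on feedback_tree_graph_strongly_connected feedback_bound
  show ?thesis unfolding m_def[symmetric] by metis
qed

end
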